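(* Let $n\geq 8$ be even and $r=n/2$. Let $V=\{v_0,\dots,v_r\}\sqcup\{w_2,\dots,w_r\}$ (so $|V|=n$) and consider the labelled graph on $V$ with edges $\{v_k,v_{k+1}\}$ with label $k$ for $0\leq k\leq r-1$, edges $\{w_k,w_{k+1}\}$ with label $k$ for $2\leq k\leq r-1$, and the edge $\{v_r,w_r\}$ with label $r-2$. Then $G=\mathrm{Sym}(V)\cong S_n$ and $(G,(\rho_0,\dots,\rho_{r-1}))$ is a string C-group.
   Context: A string group generated by involutions (sggi) of rank $r$ is a pair $(G,(\rho_0,\dots,\rho_{r-1}))$ where $\rho_0,\dots,\rho_{r-1}$ are involutions generating the group $G$ such that $(\rho_i\rho_j)^2=1$ whenever $|i-j|\geq 2$. It is a string C-group if in addition it satisfies the intersection property: for all $J,K\subseteq\{0,\dots,r-1\}$, $\langle \rho_j : j\in J\rangle\cap\langle\rho_k : k\in K\rangle=\langle \rho_j : j\in J\cap K\rangle$. Labelled-graph convention: the vertex set $V$ is finite, and each edge $\{a,b\}$ ($a\neq b$) carries one or more labels from $\{0,\dots,r-1\}$, the edges carrying any given label being pairwise disjoint; $\rho_k$ denotes the permutation of $V$ equal to the product of the transpositions $(a\,b)$ over all edges $\{a,b\}$ carrying label $k$, and $G=\langle\rho_0,\dots,\rho_{r-1}\rangle\leq \mathrm{Sym}(V)$. *)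

theory Defs
  imports "HOL-Algebra.Algebra"
begin

definition sggi :: "('g, 'b) monoid_scheme \<Rightarrow> nat \<Rightarrow> (nat \<Rightarrow> 'g) \<Rightarrow> bool" where
  "sggi G r rho \<longleftrightarrow> group G
     \<and> (\<forall>i<r. rho i \<in> carrier G \<and> rho i \<noteq> \<one>\<^bsub>G\<^esub> \<and> rho i \<otimes>\<^bsub>G\<^esub> rho i = \<one>\<^bsub>G\<^esub>)
     \<and> generate G (rho ` {..<r}) = carrier G
     \<and> (\<forall>i<r. \<forall>j<r. (i + 2 \<le> j \<or> j + 2 \<le> i) \<longrightarrow>
            (rho i \<otimes>\<^bsub>G\<^esub> rho j) [^]\<^bsub>G\<^esub> (2::nat) = \<one>\<^bsub>G\<^esub>)"

definition string_C_group :: "('g, 'b) monoid_scheme \<Rightarrow> nat \<Rightarrow> (nat \<Rightarrow> 'g) \<Rightarrow> bool" where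
  "string_C_group G r rho \<longleftrightarrow> sggi G r rho
     \<and> (\<forall>J K. J \<subseteq> {..<r} \<longrightarrow> K \<subseteq> {..<r} \<longrightarrow>
          generate G (rho ` J) \<inter> generate G (rho ` K) = generate G (rho ` (J \<inter> K)))"

text \<open>Labelled graphs: a set of pairs (edge, label), each edge a 2-element set.
The permutation of label k is the product of the transpositions of the edges
with label k (these edges are pairwise disjoint), i.e. it swaps the two ends of
each such edge and fixes every other point.\<close>

definition edge_perm :: "('a set \<times> nat) set \<Rightarrow> nat \<Rightarrow> 'a \<Rightarrow> 'a" where
  "edge_perm L k x =
     (if \<exists>y. y \<noteq> x \<and> ({x, y}, k) \<in> L then (THE y. y \<noteq> x \<and> ({x, y}, k) \<in> L) else x)"

text \<open>The concrete graph: v_i = Inl i (0 \<le> i \<le> r), w_i = Inr i (2 \<le> i \<le> r).\<close>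

definition vertsP :: "nat \<Rightarrow> (nat + nat) set" where
  "vertsP r = Inl ` {0..r} \<union> Inr ` {2..r}"

definition edgesP :: "nat \<Rightarrow> ((nat + nat) set \<times> nat) set" where
  "edgesP r = {({Inl k, Inl (k + 1)}, k) | k. k \<le> r - 1}
            \<union> {({Inr k, Inr (k + 1)}, k) | k. 2 \<le> k \<and> k \<le> r - 1}
            \<union> {({Inl r, Inr r}, r - 2)}"

text \<open>The generators as elements of the group BijGroup (vertsP r) of all
permutations of the vertex set (extensional functions on vertsP r).\<close>

definition rhoP :: "nat \<Rightarrow> nat \<Rightarrow> (nat + nat) \<Rightarrow> (nat + nat)" where
  "rhoP r k = restrict (edge_perm (edgesP r) k) (vertsP r)"

end

theory Submission
  imports Defs
begin

text \<open>Write \<open>G(J)\<close> for the group generated by the \<open>\<rho>\<^sub>j\<close>, \<open>j \<in> J\<close>. The generators are involutions and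
  \<open>\<rho>\<^sub>i\<close>, \<open>\<rho>\<^sub>j\<close> commute for \<open>|i - j| \<ge> 2\<close>. For such a family the intersection property follows, by
  induction on the rank, from the special case \<open>G({..<m}) \<inter> G({k..m}) = G({k..<m})\<close>: a set
  \<open>J \<subseteq> {..m}\<close> splits into its top block \<open>{k..m}\<close> and a part commuting with it.

  The special case is checked on the graph. Below the top, \<open>G({0..m})\<close> permutes \<open>v\<^sub>0, \<dots>, v\<^sub>m\<^sub>+\<^sub>1\<close>
  arbitrarily and otherwise only moves the \<open>w\<close>'s, while for \<open>k \<ge> 2\<close> the group \<open>G({k..m})\<close> acts
  in the same way on both paths, up to the swap \<open>v\<^sub>r \<leftrightarrow> w\<^sub>r\<close>. At the top, \<open>\<rho>\<^sub>r\<^sub>-\<^sub>2\<close> and \<open>\<rho>\<^sub>r\<^sub>-\<^sub>1\<close>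
  generate the symmetry group of a hexagon. Finally, conjugating \<open>\<rho>\<^sub>0 = (v\<^sub>0 v\<^sub>1)\<close> along the graph
  produces every transposition \<open>(v\<^sub>0 y)\<close>, so the group is all of \<open>Sym(V)\<close>.\<close>

section \<open>Closure of a set of functions under composition\<close>

inductive_set comp_closure :: "('a \<Rightarrow> 'a) set \<Rightarrow> ('a \<Rightarrow> 'a) set" for S where
  identity: "id \<in> comp_closure S"
| step: "s \<in> S \<Longrightarrow> g \<in> comp_closure S \<Longrightarrow> s \<circ> g \<in> comp_closure S"

lemma comp_closure_incl: "s \<in> S \<Longrightarrow> s \<in> comp_closure S"
  using comp_closure.step[OF _ comp_closure.identity] by fastforce

lemma comp_closure_comp:
  assumes "f \<in> comp_closure S" "g \<in> comp_closure S" shows "f \<circ> g \<in> comp_closure S"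
  using assms by (induction f rule: comp_closure.induct) (simp, metis comp_closure.step o_assoc)

lemma comp_closure_least:
  assumes "S \<subseteq> comp_closure T" shows "comp_closure S \<subseteq> comp_closure T"
proof
  fix g assume "g \<in> comp_closure S"
  then show "g \<in> comp_closure T"
    by induction (blast intro: comp_closure.identity comp_closure_comp assms[THEN subsetD])+
qed

lemma comp_closure_mono: "S \<subseteq> T \<Longrightarrow> comp_closure S \<subseteq> comp_closure T"
  by (meson comp_closure_incl comp_closure_least subset_iff)

lemma comp_closure_inverse:
  assumes "\<And>s. s \<in> S \<Longrightarrow> s \<circ> s = id" and "g \<in> comp_closure S"
  obtains h where "h \<in> comp_closure S" "h \<circ> g = id" "g \<circ> h = id"
proof -
  have "\<exists>h\<in>comp_closure S. h \<circ> g = id \<and> g \<circ> h = id"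
    using assms(2)
  proof (induction g rule: comp_closure.induct)
    case identity then show ?case by (intro bexI[of _ id]) (auto intro: comp_closure.identity)
  next
    case (step s g)
    then obtain h where h: "h \<in> comp_closure S" "h \<circ> g = id" "g \<circ> h = id" by blast
    have "h \<circ> s \<in> comp_closure S" using h(1) step(1) by (blast intro: comp_closure_comp comp_closure_incl)
    moreover have "(h \<circ> s) \<circ> (s \<circ> g) = id" "(s \<circ> g) \<circ> (h \<circ> s) = id"
      by (metis h(2,3) assms(1)[OF step(1)] comp_id o_assoc)+
    ultimately show ?case by blast
  qed
  then show thesis using that by blast
qed

lemma comp_closure_cancel_left:
  assumes "\<And>s. s \<in> S \<Longrightarrow> s \<circ> s = id" and "a \<in> comp_closure S" "a \<circ> b \<in> comp_closure S"
  shows "b \<in> comp_closure S"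
proof -
  obtain h where h: "h \<in> comp_closure S" "h \<circ> a = id" using comp_closure_inverse assms(1,2) by blast
  have "b = h \<circ> (a \<circ> b)" by (simp add: h(2) o_assoc)
  then show ?thesis using comp_closure_comp[OF h(1) assms(3)] by simp
qed

lemma comp_closure_cancel_right:
  assumes "\<And>s. s \<in> S \<Longrightarrow> s \<circ> s = id" and "b \<in> comp_closure S" "a \<circ> b \<in> comp_closure S"
  shows "a \<in> comp_closure S"
proof -
  obtain h where h: "h \<in> comp_closure S" "b \<circ> h = id" using comp_closure_inverse assms(1,2) by blast
  have "a = (a \<circ> b) \<circ> h" by (simp add: h(2) flip: o_assoc)
  then show ?thesis using comp_closure_comp[OF assms(3) h(1)] by simp
qed

lemma comp_closure_fixpoint:
  assumes "\<And>s. s \<in> S \<Longrightarrow> s p = p" "g \<in> comp_closure S" shows "g p = p"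
  using assms(2) by (induction g rule: comp_closure.induct) (auto simp: assms(1))

lemma comp_closure_commute:
  assumes "\<And>s. s \<in> S \<Longrightarrow> s \<circ> t = t \<circ> s" "g \<in> comp_closure S" shows "g \<circ> t = t \<circ> g"
  using assms(2) by (induction g rule: comp_closure.induct) (simp, metis assms(1) o_assoc)

lemma comp_closure_permutes:
  assumes "\<And>s. s \<in> S \<Longrightarrow> s permutes V" "g \<in> comp_closure S" shows "g permutes V"
  using assms(2)
  by (induction g rule: comp_closure.induct) (blast intro: permutes_id permutes_compose assms(1))+

lemma comp_closure_involution:
  assumes "s \<circ> s = id" shows "comp_closure {s} = {id, s}"
proof (intro equalityI subsetI)
  fix g assume "g \<in> comp_closure {s}"
  then show "g \<in> {id, s}"
  proof induction
    case (step s' g)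
    then have "s' = s" "g = id \<or> g = s" by auto
    then show ?case using assms by (metis comp_id insertCI)
  qed simp
qed (auto intro: comp_closure.identity comp_closure_incl)

lemma transpose_conj_involution:
  assumes "g \<circ> g = id"
  shows "g \<circ> Transposition.transpose a b \<circ> g = Transposition.transpose (g a) (g b)"
proof
  fix x
  have "g (g y) = y" for y using assms by (metis comp_apply id_apply)
  then show "(g \<circ> Transposition.transpose a b \<circ> g) x = Transposition.transpose (g a) (g b) x"
    by (auto simp: Transposition.transpose_def)
qed

lemma permutes_in_if_star_transpositions:
  assumes comp: "\<And>f g. f \<in> C \<Longrightarrow> g \<in> C \<Longrightarrow> f \<circ> g \<in> C" and "id \<in> C"
    and star: "\<And>b. b \<in> S \<Longrightarrow> Transposition.transpose a b \<in> C"
    and "a \<in> S" "finite S" "p permutes S"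
  shows "p \<in> C"
proof -
  have transpositions: "Transposition.transpose x y \<in> C" if "x \<in> S" "y \<in> S" for x y
  proof (cases "x = a \<or> y = a \<or> x = y")
    case True then show ?thesis using star[of x] star[of y] that \<open>id \<in> C\<close> by (auto simp: transpose_commute)
  next
    case False
    then have "Transposition.transpose x y
        = Transposition.transpose a x \<circ> Transposition.transpose a y \<circ> Transposition.transpose a x"
      using transpose_comp_triple[of x y a] by (metis transpose_commute)
    then show ?thesis using star that comp by metis
  qed
  show ?thesis using \<open>p permutes S\<close> \<open>finite S\<close>
    by (induction rule: permutes_induct) (blast intro: \<open>id \<in> C\<close> comp transpositions)+
qed

lemma map_permutes_in_if_adjacent_transpositions:
  fixes F :: "(nat \<Rightarrow> nat) \<Rightarrow> 'b \<Rightarrow> 'b"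
  assumes comp: "\<And>f g. f \<in> C \<Longrightarrow> g \<in> C \<Longrightarrow> f \<circ> g \<in> C" and "F id \<in> C"
    and hom: "\<And>f g. F (f \<circ> g) = F f \<circ> F g"
    and first: "a < c \<Longrightarrow> F (Transposition.transpose a (Suc a)) \<in> C"
    and next_: "\<And>b. a < b \<Longrightarrow> b < c \<Longrightarrow>
       \<exists>g\<in>C. g \<circ> F (Transposition.transpose a b) \<circ> g = F (Transposition.transpose a (Suc b))"
    and "p permutes {a..c}"
  shows "F p \<in> C"
proof -
  have star: "F (Transposition.transpose a b) \<in> C" if "a \<le> b" "b \<le> c" for b
    using that
  proof (induction b rule: dec_induct)
    case base then show ?case using \<open>F id \<in> C\<close> by (metis transpose_same)
  next
    case (step n)
    show ?case
    proof (cases "n = a")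
      case True then show ?thesis using first step.prems by simp
    next
      case False
      then have "a < n" "n < c" using step by auto
      then obtain g where "g \<in> C"
        "g \<circ> F (Transposition.transpose a n) \<circ> g = F (Transposition.transpose a (Suc n))"
        using next_ by blast
      moreover have "F (Transposition.transpose a n) \<in> C" using step by simp
      ultimately show ?thesis using comp by metis
    qed
  qed
  show ?thesis
  proof (cases "a \<le> c")
    case True
    have "p \<in> {f. F f \<in> C}"
      by (rule permutes_in_if_star_transpositions[where a = a]) (use assms star True in \<open>auto simp: hom\<close>)
    then show ?thesis by simp
  next
    case False
    then have "p = id" using \<open>p permutes {a..c}\<close> by simp
    then show ?thesis using \<open>F id \<in> C\<close> by simp
  qed
qed

lemma permutes_Diff_fixpoints:
  assumes "p permutes S" "\<And>a. a \<in> A \<Longrightarrow> p a = a" shows "p permutes S - A"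
  using assms unfolding permutes_def by (metis Diff_iff)

lemma inj_fixing_all_but_two:
  assumes "inj u" "\<And>p. p \<noteq> a \<Longrightarrow> p \<noteq> b \<Longrightarrow> u p = p"
  shows "u = id \<or> u = Transposition.transpose a b"
proof -
  have "u a \<in> {a, b}" "u b \<in> {a, b}"
    using assms by (metis injD insertCI)+
  then consider "u a = a" "u b = b" | "u a = b" "u b = a"
    using assms(1) by (auto dest: injD)
  then show ?thesis
  proof cases
    case 1 then have "u = id" using assms(2) by (intro ext) (metis id_apply)
    then show ?thesis ..
  next
    case 2 then have "u = Transposition.transpose a b"
      using assms(2) by (intro ext) (auto simp: Transposition.transpose_def)
    then show ?thesis ..
  qed
qed

section \<open>The intersection property for string families of involutions\<close>

lemma top_block_exists:
  fixes I :: "nat set"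
  assumes "I \<subseteq> {..m}"
  obtains k where "k \<le> Suc m" "{k..m} \<subseteq> I" "\<And>i. i \<in> I - {k..m} \<Longrightarrow> i + 2 \<le> k"
proof -
  define k where "k = (LEAST k. {k..m} \<subseteq> I)"
  have "{Suc m..m} \<subseteq> I" by simp
  then have k: "{k..m} \<subseteq> I" "k \<le> Suc m"
    unfolding k_def by (fact LeastI, fact Least_le)
  have "i + 2 \<le> k" if "i \<in> I - {k..m}" for i
  proof (rule ccontr)
    assume "\<not> i + 2 \<le> k"
    moreover have "i \<le> m" "i \<in> I" "i \<notin> {k..m}" using that assms by auto
    ultimately have "i < k" "k = Suc i" by auto
    then have "{i..m} \<subseteq> I"
      using k(1) \<open>i \<in> I\<close> atLeastAtMost_insertL[OF \<open>i \<le> m\<close>] by auto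
    then have "k \<le> i" unfolding k_def by (rule Least_le)
    then show False using \<open>i < k\<close> by simp
  qed
  then show thesis using that k by blast
qed

locale string_involutions =
  fixes e :: "nat \<Rightarrow> 'a \<Rightarrow> 'a"
  assumes involution: "e i \<circ> e i = id"
    and far_commute: "i + 2 \<le> j \<Longrightarrow> e i \<circ> e j = e j \<circ> e i"
begin

abbreviation parabolic :: "nat set \<Rightarrow> ('a \<Rightarrow> 'a) set" where
  "parabolic J \<equiv> comp_closure (e ` J)"

lemma parabolic_mono: "I \<subseteq> J \<Longrightarrow> parabolic I \<subseteq> parabolic J"
  by (simp add: comp_closure_mono image_mono)

lemma parabolic_memI: "x \<in> parabolic I \<Longrightarrow> I \<subseteq> J \<Longrightarrow> x \<in> parabolic J"
  using parabolic_mono by blast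

lemma parabolic_cancel_left: "a \<in> parabolic J \<Longrightarrow> a \<circ> b \<in> parabolic J \<Longrightarrow> b \<in> parabolic J"
  using comp_closure_cancel_left involution by blast

lemma parabolic_cancel_right: "b \<in> parabolic J \<Longrightarrow> a \<circ> b \<in> parabolic J \<Longrightarrow> a \<in> parabolic J"
  using comp_closure_cancel_right involution by blast

lemma parabolic_Un_decomp:
  assumes far: "\<And>i j. i \<in> I \<Longrightarrow> j \<in> K \<Longrightarrow> i + 2 \<le> j" and "x \<in> parabolic (I \<union> K)"
  obtains a b where "a \<in> parabolic I" "b \<in> parabolic K" "x = a \<circ> b"
proof -
  have "\<exists>a\<in>parabolic I. \<exists>b\<in>parabolic K. x = a \<circ> b"
    using assms(2)
  proof induction
    case identity then show ?case by (metis comp_closure.identity id_comp)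
  next
    case (step s g)
    then obtain a b i where ab: "a \<in> parabolic I" "b \<in> parabolic K" "g = a \<circ> b"
      and i: "i \<in> I \<union> K" "s = e i" by blast
    show ?case
    proof (cases "i \<in> I")
      case True
      then have "s \<circ> a \<in> parabolic I" using comp_closure.step ab i by blast
      moreover have "s \<circ> g = (s \<circ> a) \<circ> b" using ab(3) by (simp add: o_assoc)
      ultimately show ?thesis using ab(2) by blast
    next
      case False
      have "t \<circ> s = s \<circ> t" if "t \<in> e ` I" for t
      proof -
        obtain j where "j \<in> I" "t = e j" using \<open>t \<in> e ` I\<close> by blast
        moreover have "i \<in> K" using i False by blast
        ultimately show ?thesis using far far_commute i(2) by blast
      qed
      then have "a \<circ> s = s \<circ> a" by (rule comp_closure_commute[OF _ ab(1)])
      then have "s \<circ> g = a \<circ> (s \<circ> b)" using ab(3) by (metis o_assoc)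
      moreover have "s \<circ> b \<in> parabolic K" using comp_closure.step ab i False by blast
      ultimately show ?thesis using ab(1) by blast
    qed
  qed
  then show thesis using that by blast
qed

lemma parabolic_block_decomp:
  assumes "{k..m} \<subseteq> I" "\<And>i. i \<in> I - {k..m} \<Longrightarrow> i + 2 \<le> k" "x \<in> parabolic I"
  obtains a b where "a \<in> parabolic (I - {k..m})" "b \<in> parabolic {k..m}" "x = a \<circ> b"
proof -
  have far: "\<And>i j. i \<in> I - {k..m} \<Longrightarrow> j \<in> {k..m} \<Longrightarrow> i + 2 \<le> j" using assms(2) by fastforce
  have "x \<in> parabolic ((I - {k..m}) \<union> {k..m})" using assms(1,3) by (simp add: Un_absorb2)
  then show thesis using parabolic_Un_decomp[OF far] that by blast
qed

text \<open>Each \<open>I \<subseteq> {..m}\<close> splits off a top block \<open>{k..m}\<close> (possibly empty, \<open>k = m + 1\<close>)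
  whose complement in \<open>I\<close> lies at least two below it and therefore commutes with it.\<close>

context
  fixes m :: nat
  assumes Int_below: "\<And>I J. I \<subseteq> {..<m} \<Longrightarrow> J \<subseteq> {..<m} \<Longrightarrow> parabolic I \<inter> parabolic J \<subseteq> parabolic (I \<inter> J)"
    and Int_top: "\<And>k. k \<le> m \<Longrightarrow> parabolic {..<m} \<inter> parabolic {k..m} \<subseteq> parabolic {k..<m}"
begin

lemma Int_top_Suc: "k \<le> Suc m \<Longrightarrow> x \<in> parabolic {..<m} \<Longrightarrow> x \<in> parabolic {k..m} \<Longrightarrow> x \<in> parabolic {k..<m}"
  using Int_top[of k] by (cases "k = Suc m") auto

lemma parabolic_Int_block:
  assumes J: "{l..m} \<subseteq> J" "\<And>i. i \<in> J - {l..m} \<Longrightarrow> i + 2 \<le> l" "l \<le> Suc m"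
    and "k \<le> l" and y: "y \<in> parabolic {k..m}" "y \<in> parabolic J"
  shows "y \<in> parabolic ({k..m} \<inter> J)"
proof -
  obtain c d where cd: "c \<in> parabolic (J - {l..m})" "d \<in> parabolic {l..m}" "y = c \<circ> d"
    using parabolic_block_decomp[OF J(1,2) y(2)] by blast
  have low: "J - {l..m} \<subseteq> {..<m}" using J(2,3) by fastforce
  have "d \<in> parabolic {k..m}" using parabolic_memI[OF cd(2)] \<open>k \<le> l\<close> by simp
  then have "c \<in> parabolic {k..m}" using parabolic_cancel_right cd(3) y(1) by blast
  then have "c \<in> parabolic {k..<m}"
    using Int_top_Suc \<open>k \<le> l\<close> J(3) parabolic_memI[OF cd(1) low] by simp
  then have "c \<in> parabolic ({k..<m} \<inter> (J - {l..m}))"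
    using Int_below[of "{k..<m}" "J - {l..m}"] cd(1) low by (auto simp: lessThan_atLeast0 ivl_subset)
  then have "c \<in> parabolic ({k..m} \<inter> J)" by (rule parabolic_memI) auto
  moreover have "d \<in> parabolic ({k..m} \<inter> J)" using J(1) \<open>k \<le> l\<close> by (intro parabolic_memI[OF cd(2)]) auto
  ultimately show ?thesis using cd(3) comp_closure_comp by simp
qed

lemma parabolic_Int_blocks:
  assumes I: "{k..m} \<subseteq> I" "\<And>i. i \<in> I - {k..m} \<Longrightarrow> i + 2 \<le> k" "k \<le> Suc m"
    and J: "{l..m} \<subseteq> J" "\<And>i. i \<in> J - {l..m} \<Longrightarrow> i + 2 \<le> l" "l \<le> Suc m"
    and "k \<le> l" and x: "x \<in> parabolic I" "x \<in> parabolic J"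
  shows "x \<in> parabolic (I \<inter> J)"
proof -
  have lowI: "I - {k..m} \<subseteq> {..<m}" using I(2,3) by fastforce
  have lowJ: "J - {l..m} \<subseteq> {..<m}" using J(2,3) by fastforce
  obtain a b where ab: "a \<in> parabolic (I - {k..m})" "b \<in> parabolic {k..m}" "x = a \<circ> b"
    using parabolic_block_decomp[OF I(1,2) x(1)] by blast
  obtain c d where cd: "c \<in> parabolic (J - {l..m})" "d \<in> parabolic {l..m}" "x = c \<circ> d"
    using parabolic_block_decomp[OF J(1,2) x(2)] by blast
  text \<open>The element \<open>f = c\<inverse> a = d b\<inverse>\<close> lies in both \<open>parabolic {..<m}\<close> and \<open>parabolic {k..m}\<close>.\<close>
  obtain c' where c': "c' \<in> parabolic (J - {l..m})" "c' \<circ> c = id" "c \<circ> c' = id"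
    using comp_closure_inverse[OF _ cd(1)] involution by blast
  define f where "f = c' \<circ> a"
  have "f \<circ> b = c' \<circ> (a \<circ> b)" by (simp add: f_def o_assoc)
  also have "\<dots> = (c' \<circ> c) \<circ> d" using ab(3) cd(3) by (simp add: comp_assoc)
  also have "\<dots> = d" using c'(2) by simp
  finally have "f \<in> parabolic {k..m}"
    using parabolic_cancel_right[OF ab(2)] parabolic_memI[OF cd(2)] \<open>k \<le> l\<close> by simp
  moreover have "f \<in> parabolic {..<m}"
    unfolding f_def using parabolic_memI[OF c'(1) lowJ] parabolic_memI[OF ab(1) lowI]
    by (rule comp_closure_comp)
  ultimately have f: "f \<in> parabolic {k..<m}" using Int_top_Suc I(3) by blast
  have "a = c \<circ> f" by (simp add: f_def o_assoc c'(3))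
  moreover have "c \<in> parabolic ((J - {l..m}) \<union> {k..<m})" "f \<in> parabolic ((J - {l..m}) \<union> {k..<m})"
    by (rule parabolic_memI[OF cd(1)], simp, rule parabolic_memI[OF f], simp)
  ultimately have "a \<in> parabolic ((J - {l..m}) \<union> {k..<m})" by (simp add: comp_closure_comp)
  then have "a \<in> parabolic ((I - {k..m}) \<inter> ((J - {l..m}) \<union> {k..<m}))"
    using Int_below[of "I - {k..m}" "(J - {l..m}) \<union> {k..<m}"] ab(1) lowI lowJ by (auto simp: lessThan_atLeast0 ivl_subset)
  then have aIJ: "a \<in> parabolic (I \<inter> J)" by (rule parabolic_memI) auto
  then have "b \<in> parabolic J"
    using parabolic_cancel_left[of a J b] ab(3) x(2) parabolic_memI[OF aIJ] by simp
  then have "b \<in> parabolic ({k..m} \<inter> J)" using parabolic_Int_block[OF J \<open>k \<le> l\<close> ab(2)] by simp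
  then have "b \<in> parabolic (I \<inter> J)" by (rule parabolic_memI) (use I(1) in auto)
  then show ?thesis using aIJ ab(3) comp_closure_comp by simp
qed

lemma parabolic_Int_step:
  assumes "I \<subseteq> {..m}" "J \<subseteq> {..m}"
  shows "parabolic I \<inter> parabolic J \<subseteq> parabolic (I \<inter> J)"
proof -
  obtain k where k: "k \<le> Suc m" "{k..m} \<subseteq> I" "\<And>i. i \<in> I - {k..m} \<Longrightarrow> i + 2 \<le> k"
    using top_block_exists[OF assms(1)] by blast
  obtain l where l: "l \<le> Suc m" "{l..m} \<subseteq> J" "\<And>i. i \<in> J - {l..m} \<Longrightarrow> i + 2 \<le> l"
    using top_block_exists[OF assms(2)] by blast
  show ?thesis
  proof (cases "k \<le> l")
    case True then show ?thesis using parabolic_Int_blocks[OF k(2,3,1) l(2,3,1)] by blast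
  next
    case False then show ?thesis using parabolic_Int_blocks[OF l(2,3,1) k(2,3,1)] by (auto simp: Int_commute)
  qed
qed

end

theorem parabolic_Int:
  assumes "\<And>m k. m < N \<Longrightarrow> k \<le> m \<Longrightarrow> parabolic {..<m} \<inter> parabolic {k..m} \<subseteq> parabolic {k..<m}"
    and "I \<subseteq> {..<N}" "J \<subseteq> {..<N}"
  shows "parabolic I \<inter> parabolic J \<subseteq> parabolic (I \<inter> J)"
  using assms
proof (induction N arbitrary: I J)
  case 0 then show ?case by simp
next
  case (Suc N)
  have below: "parabolic I' \<inter> parabolic J' \<subseteq> parabolic (I' \<inter> J')"
    if "I' \<subseteq> {..<N}" "J' \<subseteq> {..<N}" for I' J'
    using Suc.IH Suc.prems(1) that by simp
  have top: "parabolic {..<N} \<inter> parabolic {k..N} \<subseteq> parabolic {k..<N}" if "k \<le> N" for k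
    using Suc.prems(1) that by simp
  have "I \<subseteq> {..N}" "J \<subseteq> {..N}" using Suc.prems(2,3) by (auto simp: lessThan_Suc_atMost)
  show ?case
  proof (rule parabolic_Int_step)
    show "parabolic I' \<inter> parabolic J' \<subseteq> parabolic (I' \<inter> J')"
      if "I' \<subseteq> {..<N}" "J' \<subseteq> {..<N}" for I' J' using below that .
  qed fact+
qed

end

section \<open>Groups of bijections\<close>

lemma restrict_permutes_in_Bij: "p permutes V \<Longrightarrow> restrict p V \<in> Bij V"
  unfolding Bij_def using permutes_imp_bij by fastforce

lemma Bij_eq_restrict_permutes:
  assumes "f \<in> Bij V" obtains p where "p permutes V" "f = restrict p V"
proof
  define p where "p x = (if x \<in> V then f x else x)" for x
  have "bij_betw p V V" using assms by (simp add: Bij_def p_def cong: bij_betw_cong)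
  then show "p permutes V" by (rule bij_imp_permutes) (simp add: p_def)
  show "f = restrict p V" using assms by (intro extensionalityI[of _ V]) (auto simp: Bij_def p_def)
qed

lemma restrict_permutes_inj:
  assumes "p permutes V" "q permutes V" "restrict p V = restrict q V" shows "p = q"
proof
  fix x show "p x = q x"
    using assms permutes_not_in[OF assms(1)] permutes_not_in[OF assms(2)] by (metis restrict_apply')
qed

lemma BijGroup_mult_restrict:
  assumes "a permutes V" "b permutes V"
  shows "restrict a V \<otimes>\<^bsub>BijGroup V\<^esub> restrict b V = restrict (a \<circ> b) V"
  using restrict_permutes_in_Bij[OF assms(1)] restrict_permutes_in_Bij[OF assms(2)]
    permutes_in_image[OF assms(2)]
  by (auto simp: BijGroup_def compose_def fun_eq_iff)

lemma BijGroup_one_eq_restrict: "\<one>\<^bsub>BijGroup V\<^esub> = restrict id V"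
  by (simp add: BijGroup_def restrict_def fun_eq_iff)

lemma sym_group_iso_BijGroup: "sym_group n \<cong> BijGroup {1..n}"
proof (rule is_isoI, rule isoI)
  show "(\<lambda>p. restrict p {1..n}) \<in> hom (sym_group n) (BijGroup {1..n})"
  proof (rule homI)
    show "restrict p {1..n} \<in> carrier (BijGroup {1..n})" if "p \<in> carrier (sym_group n)" for p
      using restrict_permutes_in_Bij that by (simp add: sym_group_carrier BijGroup_def)
  qed (simp add: sym_group_carrier sym_group_mult BijGroup_mult_restrict)
  have "inj_on (\<lambda>p. restrict p {1..n}) {p. p permutes {1..n}}"
    by (auto intro: inj_onI restrict_permutes_inj)
  moreover have "(\<lambda>p. restrict p {1..n}) ` {p. p permutes {1..n}} = Bij {1..n}"
    using restrict_permutes_in_Bij Bij_eq_restrict_permutes by blast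
  ultimately show "bij_betw (\<lambda>p. restrict p {1..n}) (carrier (sym_group n)) (carrier (BijGroup {1..n}))"
    by (simp add: bij_betw_def sym_group_def BijGroup_def)
qed

lemma BijGroup_iso_of_bij_betw:
  assumes h: "bij_betw h A B" shows "BijGroup A \<cong> BijGroup B"
proof -
  define h' where "h' = inv_into A h"
  have h': "bij_betw h' B A" unfolding h'_def by (rule bij_betw_inv_into[OF h])
  have h'h: "x \<in> A \<Longrightarrow> h' (h x) = x" and hh': "y \<in> B \<Longrightarrow> h (h' y) = y" for x y
    unfolding h'_def using h by (auto simp: bij_betw_def f_inv_into_f)
  define \<Phi> where "\<Phi> f = restrict (h \<circ> f \<circ> h') B" for f
  define \<Psi> where "\<Psi> g = restrict (h' \<circ> g \<circ> h) A" for g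
  have Bij: "f \<in> Bij A \<Longrightarrow> bij_betw f A A" "g \<in> Bij B \<Longrightarrow> bij_betw g B B" for f g
    by (simp_all add: Bij_def)
  have \<Phi>: "\<Phi> f \<in> Bij B" if "f \<in> Bij A" for f
    using bij_betw_trans[OF bij_betw_trans[OF h' Bij(1)[OF that]] h]
    by (simp add: \<Phi>_def Bij_def cong: bij_betw_cong)
  have \<Psi>: "\<Psi> g \<in> Bij A" if "g \<in> Bij B" for g
    using bij_betw_trans[OF bij_betw_trans[OF h Bij(2)[OF that]] h']
    by (simp add: \<Psi>_def Bij_def cong: bij_betw_cong)
  have "\<Phi> \<in> hom (BijGroup A) (BijGroup B)"
  proof (rule homI)
    fix f g assume "f \<in> carrier (BijGroup A)" "g \<in> carrier (BijGroup A)"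
    then have fg: "f \<in> Bij A" "g \<in> Bij A" by (simp_all add: BijGroup_def)
    have gA: "g (h' y) \<in> A" if "y \<in> B" for y using Bij(1)[OF fg(2)] h' that by (auto dest: bij_betwE)
    have hB: "h x \<in> B" if "x \<in> A" for x using h that by (auto dest: bij_betwE)
    have h'A: "h' y \<in> A" if "y \<in> B" for y using h' that by (auto dest: bij_betwE)
    show "\<Phi> (f \<otimes>\<^bsub>BijGroup A\<^esub> g) = \<Phi> f \<otimes>\<^bsub>BijGroup B\<^esub> \<Phi> g"
      using fg \<Phi> gA hB h'A by (auto simp: BijGroup_def \<Phi>_def compose_def fun_eq_iff h'h)
  qed (use \<Phi> in \<open>simp add: BijGroup_def\<close>)
  moreover have "bij_betw \<Phi> (Bij A) (Bij B)"
  proof (rule bij_betw_byWitness[where f' = \<Psi>])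
    show "\<forall>f\<in>Bij A. \<Psi> (\<Phi> f) = f"
      using h Bij(1) by (auto simp: \<Psi>_def \<Phi>_def fun_eq_iff h'h bij_betwE Bij_def extensional_def)
    show "\<forall>g\<in>Bij B. \<Phi> (\<Psi> g) = g"
      using h' Bij(2) by (auto simp: \<Psi>_def \<Phi>_def fun_eq_iff hh' bij_betwE Bij_def extensional_def)
  qed (use \<Phi> \<Psi> in auto)
  ultimately show ?thesis by (intro is_isoI isoI) (simp_all add: BijGroup_def)
qed

lemma generate_BijGroup_restrict:
  assumes S: "\<And>s. s \<in> S \<Longrightarrow> s permutes V" "\<And>s. s \<in> S \<Longrightarrow> s \<circ> s = id"
  shows "generate (BijGroup V) ((\<lambda>f. restrict f V) ` S) = (\<lambda>f. restrict f V) ` comp_closure S"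
proof (intro equalityI subsetI)
  have perm: "g \<in> comp_closure S \<Longrightarrow> g permutes V" for g using comp_closure_permutes S(1) by blast
  fix h assume "h \<in> generate (BijGroup V) ((\<lambda>f. restrict f V) ` S)"
  then show "h \<in> (\<lambda>f. restrict f V) ` comp_closure S"
  proof induction
    case one then show ?case using comp_closure.identity by (auto simp: BijGroup_one_eq_restrict)
  next
    case (incl h) then show ?case using comp_closure_incl by blast
  next
    case (inv h)
    then obtain s where s: "s \<in> S" "h = restrict s V" by blast
    have "h \<otimes>\<^bsub>BijGroup V\<^esub> h = \<one>\<^bsub>BijGroup V\<^esub>"
      using s BijGroup_mult_restrict[OF S(1) S(1)] S(2) by (simp add: BijGroup_one_eq_restrict)
    moreover have "h \<in> carrier (BijGroup V)"
      using s restrict_permutes_in_Bij[OF S(1)[OF s(1)]] by (simp add: BijGroup_def)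
    ultimately have "inv\<^bsub>BijGroup V\<^esub> h = h" using group.inv_equality[OF group_BijGroup] by blast
    then show ?case using s comp_closure_incl by auto
  next
    case (eng h1 h2)
    then obtain a b where "a \<in> comp_closure S" "b \<in> comp_closure S" "h1 = restrict a V" "h2 = restrict b V"
      by blast
    then show ?case using BijGroup_mult_restrict perm comp_closure_comp by (metis image_eqI)
  qed
next
  have perm: "g \<in> comp_closure S \<Longrightarrow> g permutes V" for g using comp_closure_permutes S(1) by blast
  fix h assume "h \<in> (\<lambda>f. restrict f V) ` comp_closure S"
  then obtain g where g: "g \<in> comp_closure S" "h = restrict g V" by blast
  have "restrict g V \<in> generate (BijGroup V) ((\<lambda>f. restrict f V) ` S)" using g(1)
  proof induction
    case identity then show ?case using generate.one by (metis BijGroup_one_eq_restrict)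
  next
    case (step s g)
    then have "restrict s V \<otimes>\<^bsub>BijGroup V\<^esub> restrict g V \<in> generate (BijGroup V) ((\<lambda>f. restrict f V) ` S)"
      by (blast intro: generate.eng generate.incl)
    then show ?case using BijGroup_mult_restrict[OF S(1) perm] step(1,2) by metis
  qed
  then show "h \<in> generate (BijGroup V) ((\<lambda>f. restrict f V) ` S)" using g(2) by simp
qed

section \<open>The permutations defined by the graph\<close>

definition rho :: "nat \<Rightarrow> nat \<Rightarrow> nat + nat \<Rightarrow> nat + nat" where
  "rho r k x = (case x of
      Inl i \<Rightarrow> if k < r then (if i = k then Inl (Suc k) else if i = Suc k then Inl k
        else if i = r \<and> k = r - 2 then Inr r else Inl i) else Inl i
    | Inr i \<Rightarrow> if 2 \<le> k \<and> k < r then (if i = k then Inr (Suc k) else if i = Suc k then Inr k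
        else if i = r \<and> k = r - 2 then Inl r else Inr i) else Inr i)"

lemma rho_Inl: "rho r k (Inl i) = (if k < r then (if i = k then Inl (Suc k) else if i = Suc k then Inl k
    else if i = r \<and> k = r - 2 then Inr r else Inl i) else Inl i)"
  by (simp add: rho_def)

lemma rho_Inr: "rho r k (Inr i) = (if 2 \<le> k \<and> k < r then (if i = k then Inr (Suc k) else if i = Suc k then Inr k
    else if i = r \<and> k = r - 2 then Inl r else Inr i) else Inr i)"
  by (simp add: rho_def)

lemma rho_involution: "4 \<le> r \<Longrightarrow> rho r k \<circ> rho r k = id"
  by (rule ext, case_tac x) (auto simp: rho_Inl rho_Inr)

lemma rho_far_commute: "4 \<le> r \<Longrightarrow> i + 2 \<le> j \<Longrightarrow> rho r i \<circ> rho r j = rho r j \<circ> rho r i"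
  by (rule ext, case_tac x) (auto simp: rho_Inl rho_Inr)

lemma mem_edgesP: "(E, k) \<in> edgesP r \<longleftrightarrow>
   (k \<le> r - 1 \<and> E = {Inl k, Inl (Suc k)}) \<or> (2 \<le> k \<and> k \<le> r - 1 \<and> E = {Inr k, Inr (Suc k)})
   \<or> (k = r - 2 \<and> E = {Inl r, Inr r})"
  unfolding edgesP_def by auto

lemma edge_perm_edgesP:
  assumes "4 \<le> r" "k < r" shows "edge_perm (edgesP r) k = rho r k"
proof
  fix x
  have edge: "(y \<noteq> x \<and> ({x, y}, k) \<in> edgesP r) \<longleftrightarrow> (rho r k x \<noteq> x \<and> y = rho r k x)" for y
    unfolding mem_edgesP doubleton_eq_iff using assms by (cases x; cases y) (auto simp: rho_Inl rho_Inr)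
  show "edge_perm (edgesP r) k x = rho r k x"
    unfolding edge_perm_def edge by auto
qed

abbreviation adj_swap :: "nat \<Rightarrow> nat \<Rightarrow> nat" where
  "adj_swap i \<equiv> Transposition.transpose i (Suc i)"

definition swap_vw :: "nat \<Rightarrow> nat + nat \<Rightarrow> nat + nat" where
  "swap_vw r = Transposition.transpose (Inl r) (Inr r)"

definition w_part :: "nat \<Rightarrow> nat \<Rightarrow> nat + nat \<Rightarrow> nat + nat" where
  "w_part r i = map_sum id (adj_swap i) \<circ> (if i = r - 2 then swap_vw r else id)"

definition swap_sides :: "nat + nat \<Rightarrow> nat + nat" where
  "swap_sides x = (case x of Inl i \<Rightarrow> if 2 \<le> i then Inr i else Inl i
                           | Inr i \<Rightarrow> if 2 \<le> i then Inl i else Inr i)"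

lemma map_sum_transpose_id:
  "map_sum (Transposition.transpose a b) id = Transposition.transpose (Inl a) (Inl b)"
  by (rule ext, case_tac x) (auto simp: Transposition.transpose_def)

lemma w_part_map_sum_commute:
  assumes "a r = r" "inj a" shows "w_part r i \<circ> map_sum a id = map_sum a id \<circ> w_part r i"
proof
  have [simp]: "a y = r \<longleftrightarrow> y = r" "r = a y \<longleftrightarrow> y = r" for y using assms by (metis injD)+
  show "(w_part r i \<circ> map_sum a id) x = (map_sum a id \<circ> w_part r i) x" for x
    using assms by (cases x) (auto simp: w_part_def swap_vw_def Transposition.transpose_def)
qed

lemma swap_vw_map_sum_commute:
  assumes "a r = r" "inj a" shows "swap_vw r \<circ> map_sum a a = map_sum a a \<circ> swap_vw r"
proof
  have [simp]: "a y = r \<longleftrightarrow> y = r" "r = a y \<longleftrightarrow> y = r" for y using assms by (metis injD)+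
  show "(swap_vw r \<circ> map_sum a a) x = (map_sum a a \<circ> swap_vw r) x" for x
    using assms by (cases x) (auto simp: swap_vw_def Transposition.transpose_def)
qed

text \<open>On the hexagon \<open>v\<^sub>r\<^sub>-\<^sub>2 v\<^sub>r\<^sub>-\<^sub>1 w\<^sub>r w\<^sub>r\<^sub>-\<^sub>2 w\<^sub>r\<^sub>-\<^sub>1 v\<^sub>r\<close>, \<open>rho r (r - 2)\<close> is the reflection
  through the midpoint of the edge \<open>v\<^sub>r\<^sub>-\<^sub>2 v\<^sub>r\<^sub>-\<^sub>1\<close> and \<open>rho r (r - 1)\<close> the reflection through the
  vertex \<open>v\<^sub>r\<^sub>-\<^sub>2\<close>; both fix every vertex outside the hexagon.\<close>

definition hexagon :: "nat \<Rightarrow> (nat + nat) set" where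
  "hexagon r = {Inl (r - 2), Inl (r - 1), Inr r, Inr (r - 2), Inr (r - 1), Inl r}"

definition hexagon_adj :: "nat \<Rightarrow> nat + nat \<Rightarrow> nat + nat \<Rightarrow> bool" where
  "hexagon_adj r p q \<longleftrightarrow>
     (p = Inl (r - 2) \<and> q = Inl (r - 1)) \<or> (q = Inl (r - 2) \<and> p = Inl (r - 1)) \<or>
     (p = Inl (r - 1) \<and> q = Inr r) \<or> (q = Inl (r - 1) \<and> p = Inr r) \<or>
     (p = Inr r \<and> q = Inr (r - 2)) \<or> (q = Inr r \<and> p = Inr (r - 2)) \<or>
     (p = Inr (r - 2) \<and> q = Inr (r - 1)) \<or> (q = Inr (r - 2) \<and> p = Inr (r - 1)) \<or>
     (p = Inr (r - 1) \<and> q = Inl r) \<or> (q = Inr (r - 1) \<and> p = Inl r) \<or>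
     (p = Inl r \<and> q = Inl (r - 2)) \<or> (q = Inl r \<and> p = Inl (r - 2))"

definition hexagon_auts :: "nat \<Rightarrow> (nat + nat \<Rightarrow> nat + nat) set" where
  "hexagon_auts r = {x. inj x \<and> (\<forall>p. p \<notin> hexagon r \<longrightarrow> x p = p)
                        \<and> (\<forall>p q. hexagon_adj r p q \<longrightarrow> hexagon_adj r (x p) (x q))}"

lemma hexagon_auts_comp: "x \<in> hexagon_auts r \<Longrightarrow> y \<in> hexagon_auts r \<Longrightarrow> x \<circ> y \<in> hexagon_auts r"
  unfolding hexagon_auts_def by (auto intro: inj_compose)

locale two_path_graph =
  fixes r :: nat
  assumes rank_ge_4: "4 \<le> r"
begin

sublocale string_involutions "rho r"
  by unfold_locales (use rank_ge_4 in \<open>auto intro: rho_involution rho_far_commute\<close>)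

lemma rho_in_parabolic: "i \<in> J \<Longrightarrow> rho r i \<in> parabolic J"
  by (rule comp_closure_incl) simp

lemma rho_eq_low: "k < 2 \<Longrightarrow> rho r k = map_sum (adj_swap k) id"
  using rank_ge_4 by (intro ext, case_tac x) (auto simp: rho_Inl rho_Inr Transposition.transpose_def)

lemma rho_eq_w_part: "2 \<le> k \<Longrightarrow> k < r \<Longrightarrow> rho r k = map_sum (adj_swap k) id \<circ> w_part r k"
  using rank_ge_4
  by (intro ext, case_tac x) (auto simp: rho_Inl rho_Inr w_part_def swap_vw_def Transposition.transpose_def)

lemma rho_eq_diag: "2 \<le> k \<Longrightarrow> k + 3 \<le> r \<Longrightarrow> rho r k = map_sum (adj_swap k) (adj_swap k)"
  using rank_ge_4 by (intro ext, case_tac x) (auto simp: rho_Inl rho_Inr Transposition.transpose_def)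

lemma rho_eq_diag_swap_vw: "rho r (r - 2) = map_sum (adj_swap (r - 2)) (adj_swap (r - 2)) \<circ> swap_vw r"
  using rank_ge_4
  by (intro ext, case_tac x) (auto simp: rho_Inl rho_Inr swap_vw_def Transposition.transpose_def)

lemma braid_cube_eq_swap_vw:
  assumes "5 \<le> r"
  shows "rho r (r - 3) \<circ> rho r (r - 2) \<circ> rho r (r - 3) \<circ> rho r (r - 2) \<circ> rho r (r - 3) \<circ> rho r (r - 2)
    = swap_vw r"
  using assms by (intro ext, case_tac x) (auto simp: rho_Inl rho_Inr swap_vw_def Transposition.transpose_def)

lemma rho_swap_sides_commute: "2 \<le> k \<Longrightarrow> rho r k \<circ> swap_sides = swap_sides \<circ> rho r k"
  using rank_ge_4 by (intro ext, case_tac x) (auto simp: rho_Inl rho_Inr swap_sides_def)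

lemma rho_permutes: "rho r k permutes vertsP r"
proof (rule bij_imp_permutes)
  show "bij_betw (rho r k) (vertsP r) (vertsP r)"
    using rho_involution[OF rank_ge_4, of k]
    by (intro bij_betw_byWitness[where f' = "rho r k"])
      (auto simp: fun_eq_iff vertsP_def rho_Inl rho_Inr split: if_splits)
  show "x \<notin> vertsP r \<Longrightarrow> rho r k x = x" for x by (cases x) (auto simp: vertsP_def rho_Inl rho_Inr)
qed

lemma parabolic_permutes: "x \<in> parabolic J \<Longrightarrow> x permutes vertsP r"
  by (rule comp_closure_permutes) (auto intro: rho_permutes)

lemma map_sum_id_in_parabolic:
  assumes "c \<le> r - 1" "\<alpha> permutes {1..c}"
  shows "map_sum \<alpha> id \<in> parabolic {1..<c}"
proof (rule map_permutes_in_if_adjacent_transpositions[where F = "\<lambda>\<alpha>. map_sum \<alpha> id"])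
  show "map_sum (adj_swap 1) id \<in> parabolic {1..<c}" if "1 < c"
    using rho_eq_low[of 1] rho_in_parabolic[of 1] that by simp
  show "\<exists>g\<in>parabolic {1..<c}. g \<circ> map_sum (Transposition.transpose 1 b) id \<circ> g
      = map_sum (Transposition.transpose 1 (Suc b)) id" if "1 < b" "b < c" for b
  proof (intro bexI)
    show "rho r b \<in> parabolic {1..<c}" using that by (intro rho_in_parabolic) auto
    show "rho r b \<circ> map_sum (Transposition.transpose 1 b) id \<circ> rho r b
        = map_sum (Transposition.transpose 1 (Suc b)) id"
    proof -
      have "b < r" using that assms(1) by linarith
      then show ?thesis
        unfolding map_sum_transpose_id transpose_conj_involution[OF involution]
        using that rank_ge_4 by (simp add: rho_Inl)
    qed
  qed
qed (use assms(2) in \<open>auto simp: comp_closure_comp comp_closure.identity map_sum.comp map_sum.id\<close>)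

lemma map_sum_diag_in_parabolic:
  assumes "\<And>b. k \<le> b \<Longrightarrow> b < c \<Longrightarrow> map_sum (adj_swap b) (adj_swap b) \<in> parabolic J"
    and "\<sigma> permutes {k..c}"
  shows "map_sum \<sigma> \<sigma> \<in> parabolic J"
proof (rule map_permutes_in_if_adjacent_transpositions[where F = "\<lambda>\<sigma>. map_sum \<sigma> \<sigma>"])
  show "\<exists>g\<in>parabolic J. g \<circ> map_sum (Transposition.transpose k b) (Transposition.transpose k b) \<circ> g
      = map_sum (Transposition.transpose k (Suc b)) (Transposition.transpose k (Suc b))"
    if "k < b" "b < c" for b
  proof (intro bexI)
    have "adj_swap b \<circ> Transposition.transpose k b \<circ> adj_swap b = Transposition.transpose k (Suc b)"
      using that by (subst transpose_conj_involution) auto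
    then show "map_sum (adj_swap b) (adj_swap b) \<circ> map_sum (Transposition.transpose k b) (Transposition.transpose k b)
        \<circ> map_sum (adj_swap b) (adj_swap b)
        = map_sum (Transposition.transpose k (Suc b)) (Transposition.transpose k (Suc b))"
      by (simp add: map_sum.comp)
    show "map_sum (adj_swap b) (adj_swap b) \<in> parabolic J" using assms(1) that by simp
  qed
qed (use assms in \<open>auto simp: comp_closure_comp comp_closure.identity map_sum.comp map_sum.id\<close>)

lemma map_sum_diag_in_parabolic_mid:
  assumes "2 \<le> k" "c + 2 \<le> r" "\<sigma> permutes {k..c}"
  shows "map_sum \<sigma> \<sigma> \<in> parabolic {k..<c}"
  using assms by (intro map_sum_diag_in_parabolic[OF _ assms(3)])
    (auto simp flip: rho_eq_diag intro: rho_in_parabolic)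

lemma swap_vw_in_parabolic:
  assumes "2 \<le> k" "k + 3 \<le> r" shows "swap_vw r \<in> parabolic {k..r-2}"
proof -
  have "r - 3 \<in> {k..r-2}" "r - 2 \<in> {k..r-2}" using assms by auto
  then have "rho r (r - 3) \<circ> rho r (r - 2) \<circ> rho r (r - 3) \<circ> rho r (r - 2) \<circ> rho r (r - 3)
      \<circ> rho r (r - 2) \<in> parabolic {k..r-2}"
    by (intro comp_closure_comp; simp add: rho_in_parabolic)
  moreover have "5 \<le> r" using assms by simp
  ultimately show ?thesis by (simp only: braid_cube_eq_swap_vw)
qed

lemma map_sum_diag_in_parabolic_top:
  assumes "2 \<le> k" "k + 3 \<le> r" "\<sigma> permutes {k..r-1}"
  shows "map_sum \<sigma> \<sigma> \<in> parabolic {k..r-2}"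
proof (rule map_sum_diag_in_parabolic[OF _ assms(3)])
  fix b assume b: "k \<le> b" "b < r - 1"
  show "map_sum (adj_swap b) (adj_swap b) \<in> parabolic {k..r-2}"
  proof (cases "b + 3 \<le> r")
    case True then show ?thesis using b assms rho_eq_diag[of b] rho_in_parabolic[of b] by auto
  next
    case False
    then have "b = r - 2" using b by auto
    then have "map_sum (adj_swap b) (adj_swap b) = rho r b \<circ> swap_vw r"
      by (simp add: rho_eq_diag_swap_vw swap_vw_def comp_assoc)
    moreover have "rho r b \<in> parabolic {k..r-2}" using b by (intro rho_in_parabolic) auto
    ultimately show ?thesis using swap_vw_in_parabolic[OF assms(1,2)] comp_closure_comp by metis
  qed
qed

lemma parabolic_low_decomp:
  assumes "a \<le> 1" "b + 2 \<le> r" "x \<in> parabolic {a..b}"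
  obtains \<alpha> z where "\<alpha> permutes {a..Suc b}" "z \<in> comp_closure (w_part r ` {2..b})" "x = map_sum \<alpha> id \<circ> z"
proof -
  have "\<exists>\<alpha> z. \<alpha> permutes {a..Suc b} \<and> z \<in> comp_closure (w_part r ` {2..b}) \<and> x = map_sum \<alpha> id \<circ> z"
    using assms(3)
  proof induction
    case identity then show ?case
      by (intro exI[of _ id] conjI permutes_id comp_closure.identity) (simp only: map_sum.id comp_id)
  next
    case (step s g)
    then obtain \<alpha> z where \<alpha>z: "\<alpha> permutes {a..Suc b}" "z \<in> comp_closure (w_part r ` {2..b})"
      "g = map_sum \<alpha> id \<circ> z" by blast
    from step(1) obtain i where i: "i \<in> {a..b}" "s = rho r i" by blast
    have "adj_swap i \<circ> \<alpha> permutes {a..Suc b}"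
      using i by (intro permutes_compose[OF \<alpha>z(1)] permutes_swap_id) auto
    moreover have "\<exists>z'\<in>comp_closure (w_part r ` {2..b}). s \<circ> g = map_sum (adj_swap i \<circ> \<alpha>) id \<circ> z'"
    proof (cases "i < 2")
      case True
      then have "s \<circ> g = map_sum (adj_swap i \<circ> \<alpha>) id \<circ> z"
        using i \<alpha>z(3) by (simp add: rho_eq_low map_sum.comp o_assoc)
      then show ?thesis using \<alpha>z(2) by blast
    next
      case False
      have "\<alpha> r = r" using permutes_not_in[OF \<alpha>z(1)] assms(2) by simp
      then have comm: "w_part r i \<circ> map_sum \<alpha> id = map_sum \<alpha> id \<circ> w_part r i"
        using w_part_map_sum_commute permutes_inj[OF \<alpha>z(1)] by blast
      have "s \<circ> g = map_sum (adj_swap i) id \<circ> (w_part r i \<circ> map_sum \<alpha> id) \<circ> z"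
        using i \<alpha>z False assms(2) by (simp add: rho_eq_w_part o_assoc)
      also have "\<dots> = map_sum (adj_swap i \<circ> \<alpha>) id \<circ> (w_part r i \<circ> z)"
        unfolding comm by (simp add: map_sum.comp o_assoc)
      finally have "s \<circ> g = map_sum (adj_swap i \<circ> \<alpha>) id \<circ> (w_part r i \<circ> z)" .
      moreover have "w_part r i \<circ> z \<in> comp_closure (w_part r ` {2..b})"
        using \<alpha>z(2) False i by (intro comp_closure.step) auto
      ultimately show ?thesis by blast
    qed
    ultimately show ?case by blast
  qed
  then show thesis using that by blast
qed

lemma parabolic_high_decomp:
  assumes "2 \<le> k" "m + 2 \<le> r" "x \<in> parabolic {k..m}"
  obtains \<sigma> T where "\<sigma> permutes {k..Suc m}" "T \<in> {id, swap_vw r}" "x = map_sum \<sigma> \<sigma> \<circ> T"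
proof -
  have "\<exists>\<sigma> T. \<sigma> permutes {k..Suc m} \<and> T \<in> {id, swap_vw r} \<and> x = map_sum \<sigma> \<sigma> \<circ> T"
    using assms(3)
  proof induction
    case identity then show ?case
      by (intro exI[of _ id] conjI permutes_id) (simp_all only: map_sum.id comp_id insertI1)
  next
    case (step s g)
    then obtain \<sigma> T where \<sigma>T: "\<sigma> permutes {k..Suc m}" "T \<in> {id, swap_vw r}" "g = map_sum \<sigma> \<sigma> \<circ> T"
      by blast
    from step(1) obtain i where i: "i \<in> {k..m}" "s = rho r i" by blast
    have "adj_swap i \<circ> \<sigma> permutes {k..Suc m}"
      using i by (intro permutes_compose[OF \<sigma>T(1)] permutes_swap_id) auto
    moreover have "\<exists>T'\<in>{id, swap_vw r}. s \<circ> g = map_sum (adj_swap i \<circ> \<sigma>) (adj_swap i \<circ> \<sigma>) \<circ> T'"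
    proof (cases "i + 3 \<le> r")
      case True
      then have "s \<circ> g = map_sum (adj_swap i \<circ> \<sigma>) (adj_swap i \<circ> \<sigma>) \<circ> T"
        using i \<sigma>T(3) assms(1) by (simp add: rho_eq_diag map_sum.comp o_assoc)
      then show ?thesis using \<sigma>T(2) by blast
    next
      case False
      then have "i = r - 2" using i assms by auto
      have "\<sigma> r = r" using permutes_not_in[OF \<sigma>T(1)] assms(2) by simp
      then have comm: "swap_vw r \<circ> map_sum \<sigma> \<sigma> = map_sum \<sigma> \<sigma> \<circ> swap_vw r"
        using swap_vw_map_sum_commute permutes_inj[OF \<sigma>T(1)] by blast
      have "s \<circ> g = map_sum (adj_swap i) (adj_swap i) \<circ> (swap_vw r \<circ> map_sum \<sigma> \<sigma>) \<circ> T"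
        using i \<sigma>T \<open>i = r - 2\<close> by (simp add: rho_eq_diag_swap_vw o_assoc)
      also have "\<dots> = map_sum (adj_swap i \<circ> \<sigma>) (adj_swap i \<circ> \<sigma>) \<circ> (swap_vw r \<circ> T)"
        unfolding comm by (simp add: map_sum.comp o_assoc)
      finally have "s \<circ> g = map_sum (adj_swap i \<circ> \<sigma>) (adj_swap i \<circ> \<sigma>) \<circ> (swap_vw r \<circ> T)" .
      moreover have "swap_vw r \<circ> T \<in> {id, swap_vw r}" using \<sigma>T(2) by (auto simp: swap_vw_def)
      ultimately show ?thesis by blast
    qed
    ultimately show ?case by blast
  qed
  then show thesis using that by blast
qed

lemma w_parts_fix_Inl:
  assumes "z \<in> comp_closure (w_part r ` {2..b})" "i < r \<or> b + 3 \<le> r"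
  shows "z (Inl i) = Inl i"
  using assms(1) by (rule comp_closure_fixpoint[rotated])
    (use assms(2) in \<open>auto simp: w_part_def swap_vw_def Transposition.transpose_def\<close>)

lemma w_parts_in_parabolic:
  assumes "b + 2 \<le> r" shows "comp_closure (w_part r ` {2..b}) \<subseteq> parabolic {1..b}"
proof (rule comp_closure_least, rule image_subsetI)
  fix i assume i: "i \<in> {2..b}"
  have "map_sum (adj_swap i) id \<in> parabolic {1..<Suc b}"
    using i assms by (intro map_sum_id_in_parabolic permutes_swap_id) auto
  then have swap: "map_sum (adj_swap i) id \<in> parabolic {1..b}" by (simp add: atLeastLessThanSuc_atLeastAtMost)
  have "map_sum (adj_swap i) id \<circ> rho r i = w_part r i"
    using i assms by (simp add: rho_eq_w_part o_assoc map_sum.comp map_sum.id)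
  moreover have "rho r i \<in> parabolic {1..b}" using i by (intro rho_in_parabolic) auto
  then have "map_sum (adj_swap i) id \<circ> rho r i \<in> parabolic {1..b}" by (rule comp_closure_comp[OF swap])
  ultimately show "w_part r i \<in> parabolic {1..b}" by simp
qed

lemma parabolic_fixes_Inl_below: "x \<in> parabolic {k..j} \<Longrightarrow> i < k \<Longrightarrow> x (Inl i) = Inl i"
  by (rule comp_closure_fixpoint[rotated]) (auto simp: rho_Inl)

lemma parabolic_Inr_eq_Inl:
  assumes "x \<in> parabolic {k..j}" "2 \<le> k" "2 \<le> i" "x (Inl i) = Inl a" "2 \<le> a"
  shows "x (Inr i) = Inr a"
proof -
  have "x \<circ> swap_sides = swap_sides \<circ> x"
    using assms(1) by (rule comp_closure_commute[rotated]) (use assms(2) rho_swap_sides_commute in auto)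
  then have "x (swap_sides (Inl i)) = swap_sides (x (Inl i))" by (metis comp_apply)
  then show ?thesis using assms(3-5) by (simp add: swap_sides_def)
qed

lemma rho_hexagon_adj:
  assumes "k = r - 2 \<or> k = r - 1" "hexagon_adj r p q"
  shows "hexagon_adj r (rho r k p) (rho r k q)"
proof -
  have vals:
    "rho r (r-2) (Inl (r-2)) = Inl (r-1)" "rho r (r-2) (Inl (r-1)) = Inl (r-2)"
    "rho r (r-2) (Inr r) = Inl r" "rho r (r-2) (Inl r) = Inr r"
    "rho r (r-2) (Inr (r-2)) = Inr (r-1)" "rho r (r-2) (Inr (r-1)) = Inr (r-2)"
    "rho r (r-1) (Inl (r-2)) = Inl (r-2)" "rho r (r-1) (Inl (r-1)) = Inl r"
    "rho r (r-1) (Inr r) = Inr (r-1)" "rho r (r-1) (Inl r) = Inl (r-1)"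
    "rho r (r-1) (Inr (r-2)) = Inr (r-2)" "rho r (r-1) (Inr (r-1)) = Inr r"
    using rank_ge_4 by (auto simp: rho_Inl rho_Inr)
  have ne: "r - 2 \<noteq> r - 1" "r - 1 \<noteq> r" "r - 2 \<noteq> r" "r - 1 \<noteq> r - 2" "r \<noteq> r - 1" "r \<noteq> r - 2"
    using rank_ge_4 by auto
  show ?thesis
    using assms(2) unfolding hexagon_adj_def
    by (elim disjE conjE; use assms(1) in \<open>elim disjE\<close>; simp only: vals; simp add: ne)
qed

lemma rho_in_hexagon_auts:
  assumes "k = r - 2 \<or> k = r - 1" shows "rho r k \<in> hexagon_auts r"
proof -
  have "rho r k p = p" if "p \<notin> hexagon r" for p
    using that assms rank_ge_4 by (cases p) (auto simp: hexagon_def rho_Inl rho_Inr)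
  then show ?thesis
    unfolding hexagon_auts_def using rho_hexagon_adj[OF assms] permutes_inj[OF rho_permutes] by blast
qed

lemma parabolic_top_pair_in_hexagon_auts: "x \<in> parabolic {r-2..r-1} \<Longrightarrow> x \<in> hexagon_auts r"
proof (induction rule: comp_closure.induct)
  case identity then show ?case unfolding hexagon_auts_def by auto
next
  case (step s g)
  then obtain k where "k \<in> {r-2..r-1}" "s = rho r k" by blast
  moreover have "k = r - 2 \<or> k = r - 1" using \<open>k \<in> {r-2..r-1}\<close> rank_ge_4 by auto
  ultimately have "s \<in> hexagon_auts r" using rho_in_hexagon_auts by blast
  then show ?case using hexagon_auts_comp step by blast
qed

lemma hexagon_aut_eq_id:
  assumes "x \<in> hexagon_auts r" "x (Inl (r - 2)) = Inl (r - 2)" "x (Inl (r - 1)) = Inl (r - 1)"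
  shows "x = id"
proof -
  have inj: "inj x" and out: "\<And>p. p \<notin> hexagon r \<Longrightarrow> x p = p"
    and adj: "\<And>p q. hexagon_adj r p q \<Longrightarrow> hexagon_adj r (x p) (x q)"
    using assms(1) unfolding hexagon_auts_def by auto
  have ne: "r - 2 \<noteq> r - 1" "r - 1 \<noteq> r" "r - 2 \<noteq> r" using rank_ge_4 by auto
  text \<open>Walk once around the hexagon: each vertex has one neighbour already known to be fixed.\<close>
  have "hexagon_adj r (Inl (r - 1)) (x (Inr r))"
    using adj[of "Inl (r - 1)" "Inr r"] assms(3) by (simp add: hexagon_adj_def)
  then have "x (Inr r) = Inl (r - 2) \<or> x (Inr r) = Inr r" using ne by (auto simp: hexagon_adj_def)
  then have x1: "x (Inr r) = Inr r" using inj assms(2) by (metis injD sum.distinct(1))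
  have "hexagon_adj r (Inr r) (x (Inr (r - 2)))"
    using adj[of "Inr r" "Inr (r - 2)"] x1 by (simp add: hexagon_adj_def)
  then have "x (Inr (r - 2)) = Inl (r - 1) \<or> x (Inr (r - 2)) = Inr (r - 2)"
    using ne by (auto simp: hexagon_adj_def)
  then have x2: "x (Inr (r - 2)) = Inr (r - 2)" using inj assms(3) by (metis injD sum.distinct(1))
  have "hexagon_adj r (Inr (r - 2)) (x (Inr (r - 1)))"
    using adj[of "Inr (r - 2)" "Inr (r - 1)"] x2 by (simp add: hexagon_adj_def)
  then have "x (Inr (r - 1)) = Inr r \<or> x (Inr (r - 1)) = Inr (r - 1)" using ne by (auto simp: hexagon_adj_def)
  then have x3: "x (Inr (r - 1)) = Inr (r - 1)" using inj x1 ne by (metis injD sum.inject(2))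
  have "hexagon_adj r (Inr (r - 1)) (x (Inl r))"
    using adj[of "Inr (r - 1)" "Inl r"] x3 by (simp add: hexagon_adj_def)
  then have "x (Inl r) = Inr (r - 2) \<or> x (Inl r) = Inl r" using ne by (auto simp: hexagon_adj_def)
  then have x4: "x (Inl r) = Inl r" using inj x2 by (metis injD sum.distinct(1))
  show ?thesis
  proof
    fix p show "x p = id p"
      using assms(2,3) x1 x2 x3 x4 out[of p] by (cases "p \<in> hexagon r") (auto simp: hexagon_def)
  qed
qed

lemma hexagon_aut_preserving_edge:
  assumes "x \<in> hexagon_auts r"
    and "x (Inl (r - 2)) \<in> {Inl (r - 2), Inl (r - 1)}" "x (Inl (r - 1)) \<in> {Inl (r - 2), Inl (r - 1)}"
  shows "x = id \<or> x = rho r (r - 2)"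
proof -
  have inj: "inj x" using assms(1) unfolding hexagon_auts_def by auto
  have ne: "r - 2 \<noteq> r - 1" using rank_ge_4 by auto
  show ?thesis
  proof (cases "x (Inl (r - 2)) = Inl (r - 2)")
    case True
    then have "x (Inl (r - 1)) = Inl (r - 1)"
      using assms(3) inj ne by (metis injD insert_iff singletonD sum.inject(1))
    then show ?thesis using hexagon_aut_eq_id[OF assms(1) True] by simp
  next
    case False
    then have a: "x (Inl (r - 2)) = Inl (r - 1)" using assms(2) by auto
    then have "x (Inl (r - 1)) = Inl (r - 2)"
      using assms(3) inj ne by (metis injD insert_iff singletonD sum.inject(1))
    note a this
    moreover have "rho r (r - 2) (Inl (r - 2)) = Inl (r - 1)" "rho r (r - 2) (Inl (r - 1)) = Inl (r - 2)"
      using rank_ge_4 by (auto simp: rho_Inl)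
    ultimately have "rho r (r - 2) \<circ> x = id"
      using hexagon_aut_eq_id[of "rho r (r - 2) \<circ> x"] hexagon_auts_comp[OF rho_in_hexagon_auts assms(1)]
      by simp
    then have "x = rho r (r - 2)" by (metis comp_assoc comp_id id_comp involution)
    then show ?thesis ..
  qed
qed

lemma map_sum_comp_w_parts_Inl:
  assumes "x = map_sum \<alpha> id \<circ> z" "z \<in> comp_closure (w_part r ` {2..b})" "i < r"
  shows "x (Inl i) = Inl (\<alpha> i)"
  using assms w_parts_fix_Inl[OF assms(2)] by simp

lemma parabolic_Int_from_1:
  assumes "1 \<le> m" "m < r" and x: "x \<in> parabolic {..<m}" "x \<in> parabolic {1..m}"
  shows "x \<in> parabolic {1..<m}"
proof -
  have "{..<m} = {0..m-1}" "Suc (m - 1) = m" using assms(1) by auto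
  then obtain \<alpha> z where \<alpha>z: "\<alpha> permutes {0..m}" "z \<in> comp_closure (w_part r ` {2..m-1})"
    "x = map_sum \<alpha> id \<circ> z"
    using parabolic_low_decomp[of 0 "m - 1" x] x(1) assms(2) by auto
  have "Inl (\<alpha> 0) = Inl 0"
    using map_sum_comp_w_parts_Inl[OF \<alpha>z(3,2)] parabolic_fixes_Inl_below[OF x(2)] assms(2) by simp
  then have "\<alpha> permutes {0..m} - {0}" by (intro permutes_Diff_fixpoints[OF \<alpha>z(1)]) auto
  moreover have "{0..m} - {0} = {1..m}" by auto
  ultimately have "map_sum \<alpha> id \<in> parabolic {1..<m}" using map_sum_id_in_parabolic assms(2) by simp
  moreover have "z \<in> parabolic {1..<m}"
    using w_parts_in_parabolic[of "m - 1"] \<alpha>z(2) assms \<open>Suc (m - 1) = m\<close>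
    by (auto simp: atLeastLessThanSuc_atLeastAtMost[symmetric])
  ultimately show ?thesis using \<alpha>z(3) comp_closure_comp by simp
qed

lemma parabolic_Int_from_ge2:
  assumes "2 \<le> k" "k \<le> m" "m + 2 \<le> r" and x: "x \<in> parabolic {..<m}" "x \<in> parabolic {k..m}"
  shows "x \<in> parabolic {k..<m}"
proof -
  have "{..<m} = {0..m-1}" "Suc (m - 1) = m" using assms(1,2) by auto
  then obtain \<alpha> z where \<alpha>z: "\<alpha> permutes {0..m}" "z \<in> comp_closure (w_part r ` {2..m-1})"
    "x = map_sum \<alpha> id \<circ> z"
    using parabolic_low_decomp[of 0 "m - 1" x] x(1) assms(3) by auto
  obtain \<sigma> T where \<sigma>T: "\<sigma> permutes {k..Suc m}" "T \<in> {id, swap_vw r}" "x = map_sum \<sigma> \<sigma> \<circ> T"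
    using parabolic_high_decomp[OF assms(1,3) x(2)] by blast
  text \<open>Both \<open>v\<^sub>r\<close> and \<open>v\<^sub>m\<^sub>+\<^sub>1\<close> are fixed by \<open>x\<close>, which rules out \<open>T = swap_vw r\<close> and
    forces \<open>\<sigma>\<close> to fix \<open>m + 1\<close>.\<close>
  have "x (Inl r) = Inl r" "x (Inl (Suc m)) = Inl (Suc m)"
    using \<alpha>z w_parts_fix_Inl[OF \<alpha>z(2), of r] w_parts_fix_Inl[OF \<alpha>z(2), of "Suc m"]
      permutes_not_in[OF \<alpha>z(1), of r] permutes_not_in[OF \<alpha>z(1), of "Suc m"] assms by auto
  moreover have "\<sigma> r = r" using permutes_not_in[OF \<sigma>T(1)] assms by simp
  ultimately have "T = id" "\<sigma> (Suc m) = Suc m" using \<sigma>T(2,3) by (auto simp: swap_vw_def)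
  then have "\<sigma> permutes {k..Suc m} - {Suc m}" by (intro permutes_Diff_fixpoints[OF \<sigma>T(1)]) auto
  moreover have "{k..Suc m} - {Suc m} = {k..m}" by auto
  ultimately show ?thesis using map_sum_diag_in_parabolic_mid[of k m \<sigma>] assms \<sigma>T(3) \<open>T = id\<close> by simp
qed

lemma parabolic_below_top_Inl:
  assumes "x \<in> parabolic {..<r-1}"
  obtains \<alpha> where "\<alpha> permutes {0..r-1}" "\<And>i. i < r \<Longrightarrow> x (Inl i) = Inl (\<alpha> i)"
proof -
  have "{..<r-1} = {0..r-2}" "Suc (r - 2) = r - 1" using rank_ge_4 by auto
  then obtain \<alpha> z where "\<alpha> permutes {0..r-1}" "z \<in> comp_closure (w_part r ` {2..r-2})"
    "x = map_sum \<alpha> id \<circ> z"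
    using parabolic_low_decomp[of 0 "r - 2" x] assms rank_ge_4 by auto
  then show thesis using that map_sum_comp_w_parts_Inl by blast
qed

lemma parabolic_Int_top_single:
  assumes "x \<in> parabolic {..<r-1}" "x \<in> parabolic {r-1..r-1}"
  shows "x \<in> parabolic {r-1..<r-1}"
proof -
  obtain \<alpha> where \<alpha>: "\<alpha> permutes {0..r-1}" "\<And>i. i < r \<Longrightarrow> x (Inl i) = Inl (\<alpha> i)"
    using parabolic_below_top_Inl[OF assms(1)] by blast
  have "x = id \<or> x = rho r (r-1)" using comp_closure_involution[OF involution] assms(2) by simp
  moreover have "x (Inl (r - 1)) \<noteq> Inl r"
    using \<alpha>(2)[of "r - 1"] permutes_in_image[OF \<alpha>(1), of "r - 1"] rank_ge_4 by auto
  moreover have "rho r (r - 1) (Inl (r - 1)) = Inl r" using rank_ge_4 by (simp add: rho_Inl)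
  ultimately show ?thesis by (auto intro: comp_closure.identity)
qed

lemma parabolic_Int_top_pair:
  assumes "x \<in> parabolic {..<r-1}" "x \<in> parabolic {r-2..r-1}"
  shows "x \<in> parabolic {r-2..<r-1}"
proof -
  obtain \<alpha> where \<alpha>: "\<alpha> permutes {0..r-1}" "\<And>i. i < r \<Longrightarrow> x (Inl i) = Inl (\<alpha> i)"
    using parabolic_below_top_Inl[OF assms(1)] by blast
  have hex: "x \<in> hexagon_auts r" using parabolic_top_pair_in_hexagon_auts assms(2) by blast
  text \<open>\<open>x\<close> preserves the edge \<open>v\<^sub>r\<^sub>-\<^sub>2 v\<^sub>r\<^sub>-\<^sub>1\<close>: its image is a hexagon edge inside \<open>{v\<^sub>0, \<dots>, v\<^sub>r\<^sub>-\<^sub>1}\<close>.\<close>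
  have "hexagon_adj r (x (Inl (r-2))) (x (Inl (r-1)))"
    using hex unfolding hexagon_auts_def by (auto simp: hexagon_adj_def)
  then have "x (Inl i) \<in> hexagon r" if "i = r - 2 \<or> i = r - 1" for i
    using that by (auto simp: hexagon_adj_def hexagon_def)
  moreover have "x (Inl i) \<in> Inl ` {0..r-1}" if "i = r - 2 \<or> i = r - 1" for i
  proof -
    have "i < r" using that rank_ge_4 by auto
    then show ?thesis using \<alpha>(2) permutes_in_image[OF \<alpha>(1), of i] by auto
  qed
  moreover have "hexagon r \<inter> Inl ` {0..r-1} = {Inl (r - 2), Inl (r - 1)}"
    using rank_ge_4 by (auto simp: hexagon_def)
  ultimately have "x (Inl (r-2)) \<in> {Inl (r - 2), Inl (r - 1)}" "x (Inl (r-1)) \<in> {Inl (r - 2), Inl (r - 1)}"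
    by blast+
  then have "x = id \<or> x = rho r (r - 2)" using hexagon_aut_preserving_edge[OF hex] by blast
  moreover have "rho r (r - 2) \<in> parabolic {r-2..<r-1}" using rank_ge_4 by (intro rho_in_parabolic) auto
  ultimately show ?thesis by (auto intro: comp_closure.identity)
qed

lemma parabolic_top_eq_diag_off_swap_vw:
  assumes k: "2 \<le> k" "k + 3 \<le> r" and x: "x \<in> parabolic {..<r-1}" "x \<in> parabolic {k..r-1}"
  obtains \<alpha> where "\<alpha> permutes {k..r-1}" "\<And>p. p \<noteq> Inl r \<Longrightarrow> p \<noteq> Inr r \<Longrightarrow> x p = map_sum \<alpha> \<alpha> p"
proof -
  obtain \<alpha> where \<alpha>: "\<alpha> permutes {0..r-1}" and xl: "\<And>i. i < r \<Longrightarrow> x (Inl i) = Inl (\<alpha> i)"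
    using parabolic_below_top_Inl[OF x(1)] by blast
  have "\<alpha> i = i" if "i \<in> {..<k}" for i
    using xl[of i] parabolic_fixes_Inl_below[OF x(2), of i] that k by simp
  then have "\<alpha> permutes {0..r-1} - {..<k}" by (rule permutes_Diff_fixpoints[OF \<alpha>])
  moreover have "{0..r-1} - {..<k} = {k..r-1}" by auto
  ultimately have ap: "\<alpha> permutes {k..r-1}" by simp
  have "x p = map_sum \<alpha> \<alpha> p" if ne: "p \<noteq> Inl r" "p \<noteq> Inr r" for p
  proof (cases "p \<in> vertsP r")
    case False
    moreover have "map_sum \<alpha> \<alpha> p = p"
    proof (cases p)
      case (Inl a)
      then have "a \<notin> {k..r-1}" using False by (auto simp: vertsP_def)
      then show ?thesis using Inl permutes_not_in[OF ap] by simp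
    next
      case (Inr b)
      then have "b \<notin> {k..r-1}" using False k by (auto simp: vertsP_def)
      then show ?thesis using Inr permutes_not_in[OF ap] by simp
    qed
    ultimately show ?thesis using permutes_not_in[OF parabolic_permutes[OF x(2)]] by simp
  next
    case True
    then consider i where "p = Inl i" "i < r" | i where "p = Inr i" "2 \<le> i" "i < r"
      using ne by (fastforce simp: vertsP_def)
    then show ?thesis
    proof cases
      case 1 then show ?thesis using xl by simp
    next
      case 2
      have "2 \<le> \<alpha> i" using permutes_in_image[OF ap, of i] permutes_not_in[OF ap, of i] 2 k
        by (cases "i \<in> {k..r-1}") auto
      then show ?thesis using parabolic_Inr_eq_Inl[OF x(2) k(1) 2(2) xl[OF 2(3)]] 2(1) by simp
    qed
  qed
  then show thesis using that ap by blast
qed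

lemma parabolic_Int_top_from_ge2:
  assumes k: "2 \<le> k" "k + 3 \<le> r" and x: "x \<in> parabolic {..<r-1}" "x \<in> parabolic {k..r-1}"
  shows "x \<in> parabolic {k..<r-1}"
proof -
  obtain \<alpha> where ap: "\<alpha> permutes {k..r-1}"
    and eq: "\<And>p. p \<noteq> Inl r \<Longrightarrow> p \<noteq> Inr r \<Longrightarrow> x p = map_sum \<alpha> \<alpha> p"
    using parabolic_top_eq_diag_off_swap_vw[OF k x] by blast
  define u where "u = map_sum (inv' \<alpha>) (inv' \<alpha>) \<circ> x"
  have inv: "map_sum (inv' \<alpha>) (inv' \<alpha>) \<circ> map_sum \<alpha> \<alpha> = id" "map_sum \<alpha> \<alpha> \<circ> map_sum (inv' \<alpha>) (inv' \<alpha>) = id"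
    using permutes_inv_o[OF ap] by (simp_all add: map_sum.comp map_sum.id)
  have "u p = p" if "p \<noteq> Inl r" "p \<noteq> Inr r" for p
    using eq[OF that] inv(1) unfolding u_def by (metis comp_apply id_apply)
  moreover have "inj u"
    unfolding u_def using inv permutes_inj[OF parabolic_permutes[OF x(2)]]
    by (metis inj_compose o_bij bij_is_inj)
  ultimately have "u \<in> {id, swap_vw r}" using inj_fixing_all_but_two[of u] by (auto simp: swap_vw_def)
  moreover have "x = map_sum \<alpha> \<alpha> \<circ> u" unfolding u_def using inv(2) by (simp add: o_assoc)
  moreover have "map_sum \<alpha> \<alpha> \<in> parabolic {k..r-2}" using map_sum_diag_in_parabolic_top[OF k ap] .
  moreover have "swap_vw r \<in> parabolic {k..r-2}" using swap_vw_in_parabolic[OF k] .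
  moreover have "{k..r-2} = {k..<r-1}" using rank_ge_4 by auto
  ultimately show ?thesis using comp_closure_comp by auto
qed

lemma parabolic_Int_interval:
  assumes "m < r" "k \<le> m" shows "parabolic {..<m} \<inter> parabolic {k..m} \<subseteq> parabolic {k..<m}"
proof
  fix x assume x: "x \<in> parabolic {..<m} \<inter> parabolic {k..m}"
  consider "k = 0" | "k = 1" | "2 \<le> k" "m + 2 \<le> r" | "2 \<le> k" "m = r - 1" using assms by linarith
  then show "x \<in> parabolic {k..<m}"
  proof cases
    case 1 then show ?thesis using x by (simp add: lessThan_atLeast0)
  next
    case 2 then show ?thesis using parabolic_Int_from_1 x assms by auto
  next
    case 3 then show ?thesis using parabolic_Int_from_ge2 x assms by auto
  next
    case 4
    then consider "k = r - 1" | "k = r - 2" | "k + 3 \<le> r" using assms by linarith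
    then show ?thesis
    proof cases
      case 1 then show ?thesis using parabolic_Int_top_single x \<open>m = r - 1\<close> by auto
    next
      case 2 then show ?thesis using parabolic_Int_top_pair x \<open>m = r - 1\<close> by auto
    next
      case 3 then show ?thesis using parabolic_Int_top_from_ge2 x \<open>m = r - 1\<close> \<open>2 \<le> k\<close> by auto
    qed
  qed
qed

theorem intersection_property:
  "I \<subseteq> {..<r} \<Longrightarrow> J \<subseteq> {..<r} \<Longrightarrow> parabolic I \<inter> parabolic J \<subseteq> parabolic (I \<inter> J)"
  using parabolic_Int parabolic_Int_interval by blast

lemma transpose_Inl0_rho:
  assumes "1 \<le> k" "k < r" "Transposition.transpose (Inl 0) y \<in> parabolic {..<r}"
  shows "Transposition.transpose (Inl 0) (rho r k y) \<in> parabolic {..<r}"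
proof -
  have "rho r k (Inl 0) = Inl 0" using assms(1) by (simp add: rho_Inl)
  then have "rho r k \<circ> Transposition.transpose (Inl 0) y \<circ> rho r k = Transposition.transpose (Inl 0) (rho r k y)"
    using transpose_conj_involution[OF involution] by simp
  moreover have "rho r k \<in> parabolic {..<r}" using assms(2) by (intro rho_in_parabolic) simp
  ultimately show ?thesis using assms(3) comp_closure_comp by metis
qed

lemma transpose_Inl0_in_parabolic:
  assumes "y \<in> vertsP r" shows "Transposition.transpose (Inl 0) y \<in> parabolic {..<r}"
proof -
  have up: "Transposition.transpose (Inl 0) (Inl i) \<in> parabolic {..<r}" if "1 \<le> i" "i \<le> r" for i
    using that
  proof (induction i rule: dec_induct)
    case base
    have "Transposition.transpose (Inl 0) (Inl 1) = rho r 0" by (simp add: rho_eq_low map_sum_transpose_id)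
    then show ?case using rank_ge_4 by (simp add: rho_in_parabolic)
  next
    case (step n)
    then show ?case using transpose_Inl0_rho[of n "Inl n"] by (simp add: rho_Inl)
  qed
  have "rho r (r - 2) (Inl r) = Inr r" using rank_ge_4 by (auto simp: rho_Inl)
  then have top: "Transposition.transpose (Inl 0) (Inr r) \<in> parabolic {..<r}"
    using transpose_Inl0_rho[of "r - 2" "Inl r"] up[of r] rank_ge_4 by simp
  have down: "2 \<le> j \<Longrightarrow> Transposition.transpose (Inl 0) (Inr j) \<in> parabolic {..<r}" if "j \<le> r" for j
    using that
  proof (induction j rule: inc_induct)
    case base then show ?case using top by blast
  next
    case (step n)
    then show ?case using transpose_Inl0_rho[of n "Inr (Suc n)"] by (simp add: rho_Inr)
  qed
  from assms consider i where "y = Inl i" "i \<le> r" | j where "y = Inr j" "2 \<le> j" "j \<le> r"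
    by (auto simp: vertsP_def)
  then show ?thesis
  proof cases
    case 1 then show ?thesis
      using up[of i] comp_closure.identity by (cases "i = 0") (auto simp: transpose_same)
  next
    case 2 then show ?thesis using down by blast
  qed
qed

lemma permutes_in_parabolic: "p permutes vertsP r \<Longrightarrow> p \<in> parabolic {..<r}"
  by (rule permutes_in_if_star_transpositions[where a = "Inl 0"])
    (auto simp: vertsP_def comp_closure_comp comp_closure.identity transpose_Inl0_in_parabolic)

lemma rhoP_eq: "k < r \<Longrightarrow> rhoP r k = restrict (rho r k) (vertsP r)"
  by (simp add: rhoP_def edge_perm_edgesP rank_ge_4)

lemma generate_rhoP:
  assumes "J \<subseteq> {..<r}"
  shows "generate (BijGroup (vertsP r)) (rhoP r ` J) = (\<lambda>f. restrict f (vertsP r)) ` parabolic J"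
proof -
  have "rhoP r ` J = (\<lambda>k. restrict (rho r k) (vertsP r)) ` J"
    using rhoP_eq assms by (intro image_cong) auto
  then have "rhoP r ` J = (\<lambda>f. restrict f (vertsP r)) ` rho r ` J" by (simp add: image_image)
  then show ?thesis by (simp only:) (rule generate_BijGroup_restrict; auto intro: rho_permutes involution)
qed

lemma generate_rhoP_eq_carrier:
  "generate (BijGroup (vertsP r)) (rhoP r ` {..<r}) = carrier (BijGroup (vertsP r))"
proof -
  have "(\<lambda>f. restrict f (vertsP r)) ` parabolic {..<r} = Bij (vertsP r)"
    using restrict_permutes_in_Bij parabolic_permutes permutes_in_parabolic Bij_eq_restrict_permutes
    by (smt (verit) image_iff subsetI subset_antisym)
  then show ?thesis using generate_rhoP[of "{..<r}"] by (simp add: BijGroup_def)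
qed

lemma rhoP_in_carrier: "k < r \<Longrightarrow> rhoP r k \<in> carrier (BijGroup (vertsP r))"
  using rhoP_eq restrict_permutes_in_Bij[OF rho_permutes] by (simp add: BijGroup_def)

lemma subgroup_generated_rhoP:
  "subgroup_generated (BijGroup (vertsP r)) (rhoP r ` {..<r}) = BijGroup (vertsP r)"
proof -
  have "carrier (BijGroup (vertsP r)) \<inter> rhoP r ` {..<r} = rhoP r ` {..<r}" using rhoP_in_carrier by blast
  then show ?thesis unfolding subgroup_generated_def using generate_rhoP_eq_carrier by simp
qed

lemma restrict_rho_mult:
  "restrict (rho r i) (vertsP r) \<otimes>\<^bsub>BijGroup (vertsP r)\<^esub> restrict (rho r j) (vertsP r)
    = restrict (rho r i \<circ> rho r j) (vertsP r)"
  by (rule BijGroup_mult_restrict[OF rho_permutes rho_permutes])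

lemma sggi_rhoP: "sggi (BijGroup (vertsP r)) r (rhoP r)"
proof -
  let ?B = "BijGroup (vertsP r)"
  have "rhoP r i \<otimes>\<^bsub>?B\<^esub> rhoP r i = \<one>\<^bsub>?B\<^esub>" if "i < r" for i
    using that by (simp add: rhoP_eq restrict_rho_mult involution BijGroup_one_eq_restrict)
  moreover have "rhoP r i \<noteq> \<one>\<^bsub>?B\<^esub>" if "i < r" for i
  proof
    assume "rhoP r i = \<one>\<^bsub>?B\<^esub>"
    then have "restrict (rho r i) (vertsP r) (Inl i) = restrict id (vertsP r) (Inl i)"
      using that by (simp add: rhoP_eq BijGroup_one_eq_restrict)
    moreover have "Inl i \<in> vertsP r" using that by (simp add: vertsP_def)
    ultimately show False using that by (simp add: rho_Inl)
  qed
  moreover have "(rhoP r i \<otimes>\<^bsub>?B\<^esub> rhoP r j) [^]\<^bsub>?B\<^esub> (2::nat) = \<one>\<^bsub>?B\<^esub>"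
    if "i < r" "j < r" "i + 2 \<le> j \<or> j + 2 \<le> i" for i j
  proof -
    let ?x = "restrict (rho r i \<circ> rho r j) (vertsP r)"
    have "(rho r i \<circ> rho r j) \<circ> (rho r i \<circ> rho r j) = id"
      using that far_commute involution by (metis comp_assoc comp_id)
    then have "?x \<otimes>\<^bsub>?B\<^esub> ?x = \<one>\<^bsub>?B\<^esub>"
      by (simp add: BijGroup_mult_restrict permutes_compose rho_permutes BijGroup_one_eq_restrict)
    moreover have "?x \<in> carrier ?B"
      using restrict_permutes_in_Bij[OF permutes_compose[OF rho_permutes rho_permutes]]
      by (simp add: BijGroup_def)
    then have "?x [^]\<^bsub>?B\<^esub> (2::nat) = ?x \<otimes>\<^bsub>?B\<^esub> ?x"
      using monoid.l_one[OF group.is_monoid[OF group_BijGroup] \<open>?x \<in> carrier ?B\<close>]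
      by (simp add: numeral_2_eq_2)
    ultimately show ?thesis using that by (simp add: rhoP_eq restrict_rho_mult)
  qed
  ultimately show ?thesis
    unfolding sggi_def using group_BijGroup rhoP_in_carrier generate_rhoP_eq_carrier by blast
qed

lemma string_C_group_rhoP: "string_C_group (BijGroup (vertsP r)) r (rhoP r)"
proof -
  have "generate (BijGroup (vertsP r)) (rhoP r ` J) \<inter> generate (BijGroup (vertsP r)) (rhoP r ` K)
      = generate (BijGroup (vertsP r)) (rhoP r ` (J \<inter> K))"
    if "J \<subseteq> {..<r}" "K \<subseteq> {..<r}" for J K
  proof -
    let ?res = "\<lambda>f. restrict f (vertsP r)"
    have "?res ` parabolic J \<inter> ?res ` parabolic K \<subseteq> ?res ` parabolic (J \<inter> K)"
    proof
      fix h assume "h \<in> ?res ` parabolic J \<inter> ?res ` parabolic K"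
      then obtain x y where xy: "x \<in> parabolic J" "y \<in> parabolic K" "h = ?res x" "h = ?res y" by blast
      then have "x = y" using restrict_permutes_inj[OF parabolic_permutes parabolic_permutes] by metis
      then have "x \<in> parabolic (J \<inter> K)" using intersection_property[OF that] xy by blast
      then show "h \<in> ?res ` parabolic (J \<inter> K)" using xy(3) by blast
    qed
    moreover have "?res ` parabolic (J \<inter> K) \<subseteq> ?res ` parabolic J \<inter> ?res ` parabolic K"
      using parabolic_mono[of "J \<inter> K" J] parabolic_mono[of "J \<inter> K" K] by blast
    ultimately have "?res ` parabolic J \<inter> ?res ` parabolic K = ?res ` parabolic (J \<inter> K)" by (rule equalityI)
    moreover have "J \<inter> K \<subseteq> {..<r}" using that by blast
    ultimately show ?thesis using generate_rhoP that by simp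
  qed
  then show ?thesis unfolding string_C_group_def using sggi_rhoP by blast
qed

end

lemma bij_betw_vertsP: "1 \<le> r \<Longrightarrow> bij_betw (case_sum Suc ((+) r)) (vertsP r) {1..2 * r}"
proof (rule bij_betw_imageI)
  show "inj_on (case_sum Suc ((+) r)) (vertsP r)"
    by (rule inj_onI) (auto simp: vertsP_def)
  assume "1 \<le> r"
  have "k \<in> case_sum Suc ((+) r) ` vertsP r" if "k \<in> {1..2 * r}" for k
  proof (cases "k \<le> Suc r")
    case True
    then have "Inl (k - 1) \<in> vertsP r" "k = case_sum Suc ((+) r) (Inl (k - 1))"
      using that by (auto simp: vertsP_def)
    then show ?thesis by blast
  next
    case False
    then have "k - r \<in> {2..r}" "k = case_sum Suc ((+) r) (Inr (k - r))" using that by auto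
    then have "Inr (k - r) \<in> vertsP r" "k = case_sum Suc ((+) r) (Inr (k - r))"
      unfolding vertsP_def by blast+
    then show ?thesis by blast
  qed
  then show "case_sum Suc ((+) r) ` vertsP r = {1..2 * r}" using \<open>1 \<le> r\<close> by (auto simp: vertsP_def)
qed

theorem proposition3p8:
  fixes n :: nat
  assumes "even n" and "n \<ge> 8"
  shows "card (vertsP (n div 2)) = n
     \<and> carrier (subgroup_generated (BijGroup (vertsP (n div 2))) (rhoP (n div 2) ` {..<n div 2}))
         = carrier (BijGroup (vertsP (n div 2)))
     \<and> subgroup_generated (BijGroup (vertsP (n div 2))) (rhoP (n div 2) ` {..<n div 2})
         \<cong> sym_group n
     \<and> string_C_group
         (subgroup_generated (BijGroup (vertsP (n div 2))) (rhoP (n div 2) ` {..<n div 2}))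
         (n div 2) (rhoP (n div 2))"
proof -
  define r where "r = n div 2"
  have n: "n = 2 * r" using assms(1) unfolding r_def by simp
  interpret two_path_graph r by unfold_locales (use assms n in auto)
  have bij: "bij_betw (case_sum Suc ((+) r)) (vertsP r) {1..n}" using bij_betw_vertsP[of r] n rank_ge_4 by simp
  have "BijGroup (vertsP r) \<cong> sym_group n"
    using BijGroup_iso_of_bij_betw[OF bij] group.iso_sym[OF sym_group_is_group sym_group_iso_BijGroup]
    by (rule iso_trans)
  then show ?thesis
    unfolding r_def[symmetric] subgroup_generated_rhoP
    using bij_betw_same_card[OF bij] string_C_group_rhoP by simp
qed

end
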